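(* Every regular element $\gamma\in\mathfrak{t}(F)$ is conjugate under the Weyl group $W=\mathfrak{S}_d$ to at least one element in minimal form.
   Context: $F=k((\epsilon))$ with $\mathrm{val}(\epsilon)=1$; $G=\mathrm{GL}_d$, $T$ the diagonal torus, $\mathfrak{t}$ its Lie algebra; $W=\mathfrak{S}_d$ acts by permuting diagonal entries. For $\gamma=\mathrm{diag}(\gamma_1,\dots,\gamma_d)$, $\alpha_{i,j}(\gamma)=\gamma_i-\gamma_j$ and $\alpha_l=\alpha_{l,l+1}$. A regular $\gamma\in\mathfrak{t}(F)$ is in minimal form if $\mathrm{val}(\alpha_{i,j}(\gamma))=\min_{i\le l\le j-1}\mathrm{val}(\alpha_l(\gamma))$ for all $1\le i<j\le d$. *)

theory Defs
  imports "HOL-Computational_Algebra.Formal_Laurent_Series" "HOL-Combinatorics.Permutations"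
begin

text \<open>F = k((eps)) is the type 'k fls; its valuation is fls_subdegree (only applied to nonzero
elements below). A diagonal element gamma of t(F) for GL_d is a function from the
index set {0..<d} (indices shifted from 1..d to 0..d-1) to 'k fls.\<close>

definition val :: "'k::field fls \<Rightarrow> int" where
  "val x = fls_subdegree x"

definition alpha :: "(nat \<Rightarrow> 'k::field fls) \<Rightarrow> nat \<Rightarrow> nat \<Rightarrow> 'k fls" where
  "alpha \<gamma> i j = \<gamma> i - \<gamma> j"

definition regular_t :: "nat \<Rightarrow> (nat \<Rightarrow> 'k::field fls) \<Rightarrow> bool" where
  "regular_t d \<gamma> \<longleftrightarrow> (\<forall>i<d. \<forall>j<d. i \<noteq> j \<longrightarrow> alpha \<gamma> i j \<noteq> 0)"

definition minimal_form :: "nat \<Rightarrow> (nat \<Rightarrow> 'k::field fls) \<Rightarrow> bool" where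
  "minimal_form d \<gamma> \<longleftrightarrow>
     (\<forall>i j. i < j \<and> j < d \<longrightarrow>
        val (alpha \<gamma> i j) = Min ((\<lambda>l. val (alpha \<gamma> l (Suc l))) ` {i..<j}))"

definition weyl_act :: "(nat \<Rightarrow> nat) \<Rightarrow> (nat \<Rightarrow> 'a) \<Rightarrow> (nat \<Rightarrow> 'a)" where
  "weyl_act w \<gamma> = (\<lambda>i. \<gamma> (inv w i))"

end

theory Submission
  imports Defs
begin

text \<open>The valuation makes F an ultrametric space, in which every triangle is isosceles with
its two longest sides equal.  Choose a pair x, y of entries of \<gamma> at maximal distance, i.e. of
minimal valuation m, and split the entries into the ball C of those strictly closer than m to x
and its complement: every distance between C and its complement is then exactly m.  Ordering C
and its complement recursively and concatenating gives an ordering in which, for i < l < j, the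
outer difference has the smallest valuation of the three.  For such an ordering the ultrametric
inequality becomes an equality along consecutive differences, which is the minimal form.\<close>

lemma val_diff_commute:
  fixes x y :: "'k::field fls"
  shows "val (x - y) = val (y - x)"
  unfolding val_def by (rule fls_subdegree_minus_sym)

lemma val_diff_ultrametric:
  fixes x y z :: "'k::field fls"
  assumes "x \<noteq> z"
  shows "min (val (x - y)) (val (y - z)) \<le> val (x - z)"
proof -
  have "(x - y) + (y - z) \<noteq> 0" using assms by simp
  then have "min (fls_subdegree (x - y)) (fls_subdegree (y - z)) \<le> fls_subdegree ((x - y) + (y - z))"
    by (rule fls_plus_subdegree)
  then show ?thesis by (simp add: val_def)
qed

definition ultrametric_ordered :: "nat \<Rightarrow> (nat \<Rightarrow> 'k::field fls) \<Rightarrow> bool" where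
  "ultrametric_ordered d g \<longleftrightarrow>
     (\<forall>i l j. i < l \<longrightarrow> l < j \<longrightarrow> j < d \<longrightarrow>
        val (alpha g i j) \<le> val (alpha g i l) \<and> val (alpha g i j) \<le> val (alpha g l j))"

lemma ultrametric_ordered_le_one: "d \<le> 1 \<Longrightarrow> ultrametric_ordered d g"
  unfolding ultrametric_ordered_def by auto

lemma exists_split_at_diameter:
  fixes S :: "'k::field fls set"
  assumes "x \<in> S" "y \<in> S" "x \<noteq> y"
    and diameter: "\<And>a b. a \<in> S \<Longrightarrow> b \<in> S \<Longrightarrow> a \<noteq> b \<Longrightarrow> val (x - y) \<le> val (a - b)"
  shows "\<exists>C\<subseteq>S. x \<in> C \<and> y \<notin> C \<and> (\<forall>c\<in>C. \<forall>e\<in>S - C. val (c - e) \<le> val (x - y))"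
proof -
  define m where "m = val (x - y)"
  define C where "C = {c\<in>S. c = x \<or> m < val (c - x)}"
  have "val (c - e) \<le> m" if c: "c \<in> C" and e: "e \<in> S - C" for c e
  proof -
    have e_far: "e \<noteq> x" "\<not> m < val (e - x)" using e by (simp_all add: C_def)
    show ?thesis
    proof (cases "c = x")
      case True
      with e_far show ?thesis by (simp add: val_diff_commute[of x e])
    next
      case False
      show ?thesis
      proof (rule ccontr)
        assume "\<not> val (c - e) \<le> m"
        then have "m < val (e - c)" by (simp add: val_diff_commute[of c e])
        moreover have "m < val (c - x)" using c False by (simp add: C_def)
        ultimately have "m < val (e - x)" using val_diff_ultrametric[of e x c] e_far(1) by linarith
        with e_far(2) show False ..
      qed
    qed
  qed
  moreover have "y \<notin> C" using assms by (simp add: C_def m_def val_diff_commute[of x y])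
  moreover have "C \<subseteq> S" "x \<in> C" using assms(1) by (auto simp: C_def)
  ultimately show ?thesis unfolding m_def by blast
qed

text \<open>A triple straddling the two blocks has its outer pair across the blocks, and every
cross valuation is at most the least valuation m of a difference.\<close>

lemma ultrametric_ordered_append:
  fixes xs ys :: "'k::field fls list"
  assumes xs: "ultrametric_ordered (length xs) (nth xs)"
    and ys: "ultrametric_ordered (length ys) (nth ys)"
    and distinct: "distinct (xs @ ys)"
    and cross: "\<And>x y. x \<in> set xs \<Longrightarrow> y \<in> set ys \<Longrightarrow> val (x - y) \<le> m"
    and lower: "\<And>a b. a \<in> set (xs @ ys) \<Longrightarrow> b \<in> set (xs @ ys) \<Longrightarrow> a \<noteq> b \<Longrightarrow> m \<le> val (a - b)"
  shows "ultrametric_ordered (length (xs @ ys)) (nth (xs @ ys))"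
  unfolding ultrametric_ordered_def alpha_def
proof (intro allI impI)
  fix i l j
  assume ijl: "i < l" "l < j" "j < length (xs @ ys)"
  let ?zs = "xs @ ys" and ?n = "length xs"
  consider "j < ?n" | "?n \<le> i" | "i < ?n" "?n \<le> j" by linarith
  then show "val (?zs!i - ?zs!j) \<le> val (?zs!i - ?zs!l) \<and> val (?zs!i - ?zs!j) \<le> val (?zs!l - ?zs!j)"
  proof cases
    case 1
    with ijl xs show ?thesis by (simp add: nth_append ultrametric_ordered_def alpha_def)
  next
    case 2
    with ijl ys[unfolded ultrametric_ordered_def alpha_def, rule_format, of "i - ?n" "l - ?n" "j - ?n"]
    show ?thesis by (simp add: nth_append)
  next
    case 3
    have "?zs!i \<in> set xs" "?zs!j \<in> set ys"
      using 3 ijl by (simp_all add: nth_append)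
    then have "val (?zs!i - ?zs!j) \<le> m" by (rule cross)
    moreover have "?zs!i \<noteq> ?zs!l" "?zs!l \<noteq> ?zs!j"
      using ijl distinct by (simp_all add: nth_eq_iff_index_eq)
    then have "m \<le> val (?zs!i - ?zs!l)" "m \<le> val (?zs!l - ?zs!j)"
      using ijl by (simp_all add: lower del: set_append)
    ultimately show ?thesis by linarith
  qed
qed

lemma exists_ultrametric_ordered_list:
  fixes S :: "'k::field fls set"
  assumes "finite S"
  shows "\<exists>xs. distinct xs \<and> set xs = S \<and> ultrametric_ordered (length xs) (nth xs)"
  using assms
proof (induction "card S" arbitrary: S rule: less_induct)
  case less
  show ?case
  proof (cases "card S \<le> 1")
    case True
    obtain xs where "distinct xs" "set xs = S"
      using finite_distinct_list[OF less.prems] by blast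
    moreover from this True have "length xs \<le> 1" by (metis distinct_card)
    ultimately show ?thesis using ultrametric_ordered_le_one by blast
  next
    case False
    define P where "P = {(a, b). a \<in> S \<and> b \<in> S \<and> a \<noteq> b}"
    have "finite P" using less.prems by (auto simp: P_def intro: finite_subset[of _ "S \<times> S"])
    moreover have "P \<noteq> {}" using False card_le_Suc0_iff_eq[OF less.prems] by (auto simp: P_def)
    ultimately obtain p where p: "is_arg_min (\<lambda>q. val (fst q - snd q)) (\<lambda>q. q \<in> P) p"
      using ex_is_arg_min_if_finite by blast
    define x y where "x = fst p" and "y = snd p"
    have xy: "x \<in> S" "y \<in> S" "x \<noteq> y"
      using p by (simp_all add: x_def y_def is_arg_min_linorder P_def case_prod_beta)
    have diameter: "val (x - y) \<le> val (a - b)" if "a \<in> S" "b \<in> S" "a \<noteq> b" for a b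
      using p that unfolding x_def y_def is_arg_min_linorder P_def by force
    obtain C where C: "C \<subseteq> S" "x \<in> C" "y \<notin> C"
      and cross: "\<And>c e. c \<in> C \<Longrightarrow> e \<in> S - C \<Longrightarrow> val (c - e) \<le> val (x - y)"
      using exists_split_at_diameter[OF xy diameter] by blast
    have "C \<subset> S" "S - C \<subset> S" using C xy by auto
    then have "card C < card S" "card (S - C) < card S"
      using less.prems by (simp_all add: psubset_card_mono)
    moreover have "finite C" "finite (S - C)"
      using less.prems C(1) by (simp_all add: finite_subset)
    ultimately obtain xs ys where
      xs: "distinct xs" "set xs = C" "ultrametric_ordered (length xs) (nth xs)" and
      ys: "distinct ys" "set ys = S - C" "ultrametric_ordered (length ys) (nth ys)"
      using less.hyps by blast
    have S: "set (xs @ ys) = S" using xs ys C(1) by auto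
    then have "ultrametric_ordered (length (xs @ ys)) (nth (xs @ ys))"
      using xs ys cross diameter by (intro ultrametric_ordered_append[where m = "val (x - y)"]) auto
    moreover have "distinct (xs @ ys)" using xs ys by auto
    ultimately show ?thesis using S by blast
  qed
qed

lemma minimal_form_if_ultrametric_ordered:
  fixes g :: "nat \<Rightarrow> 'k::field fls"
  assumes ordered: "ultrametric_ordered d g" and inj: "inj_on g {..<d}"
  shows "minimal_form d g"
  unfolding minimal_form_def
proof (intro allI impI, elim conjE)
  fix i j :: nat
  assume "i < j" "j < d"
  then have "Suc i \<le> j" by simp
  then show "val (alpha g i j) = Min ((\<lambda>l. val (alpha g l (Suc l))) ` {i..<j})"
    using \<open>j < d\<close>
  proof (induction j rule: nat_induct_at_least)
    case (Suc j)
    have "g i \<noteq> g (Suc j)" using Suc by (intro inj_on_contraD[OF inj]) auto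
    then have "min (val (alpha g i j)) (val (alpha g j (Suc j))) \<le> val (alpha g i (Suc j))"
      unfolding alpha_def by (rule val_diff_ultrametric)
    moreover have "val (alpha g i (Suc j)) \<le> val (alpha g i j)"
      "val (alpha g i (Suc j)) \<le> val (alpha g j (Suc j))"
      using ordered[unfolded ultrametric_ordered_def, rule_format, of i j "Suc j"] Suc by simp_all
    ultimately have "val (alpha g i (Suc j)) = min (val (alpha g j (Suc j))) (val (alpha g i j))"
      by linarith
    also have "val (alpha g i j) = Min ((\<lambda>l. val (alpha g l (Suc l))) ` {i..<j})"
      using Suc by simp
    also have "min (val (alpha g j (Suc j))) (Min ((\<lambda>l. val (alpha g l (Suc l))) ` {i..<j}))
        = Min ((\<lambda>l. val (alpha g l (Suc l))) ` {i..<Suc j})"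
      using Suc.hyps by (simp add: atLeastLessThanSuc)
    finally show ?case .
  qed simp
qed

lemma exists_permutes_weyl_act_enumerates:
  assumes inj: "inj_on \<gamma> {..<d}" and xs: "distinct xs" "set xs = \<gamma> ` {..<d}"
  shows "\<exists>w. w permutes {..<d} \<and> (\<forall>i<d. weyl_act w \<gamma> i = xs ! i)"
proof -
  have len: "length xs = d"
    using xs inj by (metis card_image card_lessThan distinct_card)
  define \<sigma> where "\<sigma> = restrict_id (the_inv_into {..<d} \<gamma> \<circ> nth xs) {..<d}"
  have "bij_betw (nth xs) {..<d} (\<gamma> ` {..<d})"
    using bij_betw_nth[of xs] xs len by simp
  moreover have "bij_betw \<gamma> {..<d} (\<gamma> ` {..<d})"
    using inj by (rule inj_on_imp_bij_betw)
  ultimately have "bij_betw (the_inv_into {..<d} \<gamma> \<circ> nth xs) {..<d} {..<d}"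
    by (intro bij_betw_trans bij_betw_the_inv_into)
  then have \<sigma>: "\<sigma> permutes {..<d}"
    unfolding \<sigma>_def by (rule permutes_restrict_id)
  have "weyl_act (inv \<sigma>) \<gamma> i = xs ! i" if "i < d" for i
  proof -
    have "xs ! i \<in> \<gamma> ` {..<d}" using that len xs(2) nth_mem by blast
    then have "\<gamma> (\<sigma> i) = xs ! i"
      using that inj by (simp add: \<sigma>_def restrict_id_def f_the_inv_into_f)
    then show ?thesis by (simp add: weyl_act_def permutes_inv_inv[OF \<sigma>])
  qed
  then show ?thesis using permutes_inv[OF \<sigma>] by blast
qed

theorem mainTheorem18:
  fixes d :: nat and \<gamma> :: "nat \<Rightarrow> 'k::field fls"
  assumes "regular_t d \<gamma>"
  shows "\<exists>w. w permutes {..<d} \<and> minimal_form d (weyl_act w \<gamma>)"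
proof -
  have inj: "inj_on \<gamma> {..<d}"
    using assms unfolding regular_t_def alpha_def inj_on_def by auto
  obtain xs where xs: "distinct xs" "set xs = \<gamma> ` {..<d}"
    and ordered: "ultrametric_ordered (length xs) (nth xs)"
    using exists_ultrametric_ordered_list[of "\<gamma> ` {..<d}"] by blast
  obtain w where w: "w permutes {..<d}" and enum: "\<forall>i<d. weyl_act w \<gamma> i = xs ! i"
    using exists_permutes_weyl_act_enumerates[OF inj xs] by blast
  have len: "length xs = d"
    using xs inj by (metis card_image card_lessThan distinct_card)
  have "ultrametric_ordered d (weyl_act w \<gamma>)"
    using ordered enum len by (simp add: ultrametric_ordered_def alpha_def)
  moreover have "inj_on (weyl_act w \<gamma>) {..<d}"
    using enum xs(1) len by (simp add: inj_on_def nth_eq_iff_index_eq)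
  ultimately show ?thesis
    using w minimal_form_if_ultrametric_ordered by blast
qed

end
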